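(* The forgetful functor $\Phi:\mathrm{OS}_B^{\mathrm{op}}\to\mathrm{FS}_B^{\mathrm{op}}$ has property (F).
   Context: $\mathrm{FS}_B$: objects $(E,\sigma)$ with $E$ a finite set and $\sigma$ an involution with a unique fixed point; morphisms are surjective equivariant maps. $\mathrm{OS}_B$: objects $(E,\sigma)$ with $E$ totally ordered finite, $\sigma$ an order-reversing involution with unique fixed point $0$; with $-e:=\sigma(e)$, $E^+=\{e>0\}$, $|e|=\max\{\pm e\}$, $\mathrm{init}\,D=\min\{|e|:e\in D\}$, the morphisms $(E_1,\sigma_1)\to(E_2,\sigma_2)$ are surjective equivariant maps $\varphi$ with (i) $\mathrm{init}\,\varphi^{-1}(e)\in\varphi^{-1}(e)$ for all $e\in E_2^+$ and (ii) $\mathrm{init}\,\varphi^{-1}(e)<\mathrm{init}\,\varphi^{-1}(f)$ for all $e<f$ in $E_2^+$. A functor $\Phi:\mathcal C\to\mathcal C'$ has property (F) if for every object $x$ of $\mathcal C'$ there are finitely many objects $y_1,\dots,y_s$ of $\mathcal C$ and morphisms $\varphi_i:x\to\Phi(y_i)$ such that for every object $y$ of $\mathcal C$ and morphism $\varphi:x\to\Phi(y)$ there are $i$ and a morphism $\psi:y_i\to y$ in $\mathcal C$ with $\varphi=\Phi(\psi)\circ\varphi_i$. *)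

theory Defs
  imports Main
begin

definition fsb_obj :: "'a set \<Rightarrow> ('a \<Rightarrow> 'a) \<Rightarrow> bool" where
  "fsb_obj E \<sigma> \<longleftrightarrow> finite E \<and> (\<forall>e\<in>E. \<sigma> e \<in> E \<and> \<sigma> (\<sigma> e) = e)
     \<and> (\<exists>!z. z \<in> E \<and> \<sigma> z = z)"

definition fsb_mor :: "'a set \<Rightarrow> ('a \<Rightarrow> 'a) \<Rightarrow> 'b set \<Rightarrow> ('b \<Rightarrow> 'b) \<Rightarrow> ('a \<Rightarrow> 'b) \<Rightarrow> bool" where
  "fsb_mor E1 \<sigma>1 E2 \<sigma>2 \<phi> \<longleftrightarrow> \<phi> ` E1 = E2 \<and> (\<forall>e\<in>E1. \<phi> (\<sigma>1 e) = \<sigma>2 (\<phi> e))"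

definition osb_obj :: "'a set \<Rightarrow> ('a \<Rightarrow> 'a \<Rightarrow> bool) \<Rightarrow> ('a \<Rightarrow> 'a) \<Rightarrow> bool" where
  "osb_obj E le \<sigma> \<longleftrightarrow> finite E
     \<and> (\<forall>x\<in>E. le x x)
     \<and> (\<forall>x\<in>E. \<forall>y\<in>E. le x y \<and> le y x \<longrightarrow> x = y)
     \<and> (\<forall>x\<in>E. \<forall>y\<in>E. \<forall>z\<in>E. le x y \<and> le y z \<longrightarrow> le x z)
     \<and> (\<forall>x\<in>E. \<forall>y\<in>E. le x y \<or> le y x)
     \<and> (\<forall>e\<in>E. \<sigma> e \<in> E \<and> \<sigma> (\<sigma> e) = e)
     \<and> (\<forall>e\<in>E. \<forall>f\<in>E. le e f \<longrightarrow> le (\<sigma> f) (\<sigma> e))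
     \<and> (\<exists>!z. z \<in> E \<and> \<sigma> z = z)"

definition os_zero :: "'a set \<Rightarrow> ('a \<Rightarrow> 'a) \<Rightarrow> 'a" where
  "os_zero E \<sigma> = (THE z. z \<in> E \<and> \<sigma> z = z)"

definition os_lt :: "('a \<Rightarrow> 'a \<Rightarrow> bool) \<Rightarrow> 'a \<Rightarrow> 'a \<Rightarrow> bool" where
  "os_lt le x y \<longleftrightarrow> le x y \<and> x \<noteq> y"

definition os_pos :: "'a set \<Rightarrow> ('a \<Rightarrow> 'a \<Rightarrow> bool) \<Rightarrow> ('a \<Rightarrow> 'a) \<Rightarrow> 'a set" where
  "os_pos E le \<sigma> = {e \<in> E. os_lt le (os_zero E \<sigma>) e}"

definition os_abs :: "('a \<Rightarrow> 'a \<Rightarrow> bool) \<Rightarrow> ('a \<Rightarrow> 'a) \<Rightarrow> 'a \<Rightarrow> 'a" where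
  "os_abs le \<sigma> e = (if le (\<sigma> e) e then e else \<sigma> e)"

definition os_init :: "('a \<Rightarrow> 'a \<Rightarrow> bool) \<Rightarrow> ('a \<Rightarrow> 'a) \<Rightarrow> 'a set \<Rightarrow> 'a" where
  "os_init le \<sigma> D = (THE m. m \<in> os_abs le \<sigma> ` D \<and> (\<forall>d\<in>D. le m (os_abs le \<sigma> d)))"

definition osb_mor :: "'a set \<Rightarrow> ('a \<Rightarrow> 'a \<Rightarrow> bool) \<Rightarrow> ('a \<Rightarrow> 'a)
     \<Rightarrow> 'b set \<Rightarrow> ('b \<Rightarrow> 'b \<Rightarrow> bool) \<Rightarrow> ('b \<Rightarrow> 'b) \<Rightarrow> ('a \<Rightarrow> 'b) \<Rightarrow> bool" where
  "osb_mor E1 le1 \<sigma>1 E2 le2 \<sigma>2 \<phi> \<longleftrightarrow> fsb_mor E1 \<sigma>1 E2 \<sigma>2 \<phi>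
     \<and> (\<forall>e\<in>os_pos E2 le2 \<sigma>2.
          os_init le1 \<sigma>1 {x \<in> E1. \<phi> x = e} \<in> {x \<in> E1. \<phi> x = e})
     \<and> (\<forall>e\<in>os_pos E2 le2 \<sigma>2. \<forall>f\<in>os_pos E2 le2 \<sigma>2. os_lt le2 e f \<longrightarrow>
          os_lt le1 (os_init le1 \<sigma>1 {x \<in> E1. \<phi> x = e}) (os_init le1 \<sigma>1 {x \<in> E1. \<phi> x = f}))"

end

theory Submission
  imports Defs
begin

text \<open>Let \<open>\<phi> : E \<rightarrow> X\<close> be a surjective equivariant map out of an object of \<open>OS\<^sub>B\<close>.
  In each fibre \<open>\<phi>\<^sup>-\<^sup>1(x)\<close> take the element of absolute value \<open>init \<phi>\<^sup>-\<^sup>1(x)\<close> that lies in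
  the fibre. These representatives are permuted by the involutions, so ordering \<open>X\<close> by
  its representatives makes \<open>X\<close> an object of \<open>OS\<^sub>B\<close> and \<open>\<phi>\<close> a morphism of \<open>OS\<^sub>B\<close>.
  Hence every \<open>\<phi>\<close> factors as \<open>id \<circ> \<phi>\<close> through one of the finitely many orderings
  of \<open>X\<close> (transported to a carrier of naturals), and these orderings are the \<open>y\<^sub>i\<close>.\<close>

locale osb_object =
  fixes E :: "'b set" and le :: "'b \<Rightarrow> 'b \<Rightarrow> bool" and \<sigma> :: "'b \<Rightarrow> 'b"
  assumes obj: "osb_obj E le \<sigma>"
begin

lemma finite_carrier: "finite E"
  using obj by (simp add: osb_obj_def)

lemma le_refl: "x \<in> E \<Longrightarrow> le x x"
  using obj by (simp add: osb_obj_def)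

lemma le_antisym: "x \<in> E \<Longrightarrow> y \<in> E \<Longrightarrow> le x y \<Longrightarrow> le y x \<Longrightarrow> x = y"
  using obj unfolding osb_obj_def by blast

lemma le_trans: "x \<in> E \<Longrightarrow> y \<in> E \<Longrightarrow> z \<in> E \<Longrightarrow> le x y \<Longrightarrow> le y z \<Longrightarrow> le x z"
  using obj unfolding osb_obj_def by blast

lemma le_total: "x \<in> E \<Longrightarrow> y \<in> E \<Longrightarrow> le x y \<or> le y x"
  using obj unfolding osb_obj_def by blast

lemma inv_closed: "x \<in> E \<Longrightarrow> \<sigma> x \<in> E"
  using obj by (simp add: osb_obj_def)

lemma inv_inv: "x \<in> E \<Longrightarrow> \<sigma> (\<sigma> x) = x"
  using obj by (simp add: osb_obj_def)

lemma inv_antimono: "x \<in> E \<Longrightarrow> y \<in> E \<Longrightarrow> le x y \<Longrightarrow> le (\<sigma> y) (\<sigma> x)"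
  using obj unfolding osb_obj_def by blast

lemma ex1_fixed: "\<exists>!z. z \<in> E \<and> \<sigma> z = z"
  using obj by (simp add: osb_obj_def)

abbreviation zero :: 'b where "zero \<equiv> os_zero E \<sigma>"

lemma zero_fixed: "zero \<in> E" "\<sigma> zero = zero"
  using theI'[OF ex1_fixed] unfolding os_zero_def by auto

abbreviation abs_val :: "'b \<Rightarrow> 'b" where "abs_val \<equiv> os_abs le \<sigma>"

lemma abs_cases: "abs_val x = x \<or> abs_val x = \<sigma> x"
  by (simp add: os_abs_def)

lemma abs_closed: "x \<in> E \<Longrightarrow> abs_val x \<in> E"
  using abs_cases inv_closed by metis

lemma abs_inv: "x \<in> E \<Longrightarrow> abs_val (\<sigma> x) = abs_val x"
  using le_antisym[of x "\<sigma> x"] le_total[of x "\<sigma> x"] inv_closed[of x] inv_inv[of x]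
  by (auto simp: os_abs_def)

lemma zero_le_abs:
  assumes "x \<in> E" shows "le zero (abs_val x)"
proof -
  have "le zero x \<or> le zero (\<sigma> x)"
    using le_total[OF zero_fixed(1) assms] inv_antimono[OF assms zero_fixed(1)] zero_fixed(2)
    by auto
  moreover have "le (\<sigma> x) x \<or> le x (\<sigma> x)"
    using le_total assms inv_closed by blast
  ultimately show ?thesis
    using le_trans[OF zero_fixed(1) inv_closed[OF assms] assms]
      le_trans[OF zero_fixed(1) assms inv_closed[OF assms]]
    by (auto simp: os_abs_def)
qed

lemma ex_least:
  "finite B \<Longrightarrow> B \<noteq> {} \<Longrightarrow> B \<subseteq> E \<Longrightarrow> \<exists>m\<in>B. \<forall>b\<in>B. le m b"
proof (induction B rule: finite_ne_induct)
  case (singleton x)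
  then show ?case using le_refl by auto
next
  case (insert x B)
  then obtain m where m: "m \<in> B" "\<forall>b\<in>B. le m b" by auto
  show ?case
  proof (cases "le x m")
    case True
    then have "\<forall>b\<in>B. le x b"
      using insert.prems m le_trans[of x m] by auto
    then show ?thesis using insert.prems le_refl by auto
  next
    case False
    then have "le m x" using le_total insert.prems m by blast
    then show ?thesis using m by auto
  qed
qed

lemma os_init_least:
  assumes "finite D" "D \<noteq> {}" "D \<subseteq> E"
  shows "os_init le \<sigma> D \<in> abs_val ` D" "\<forall>d\<in>D. le (os_init le \<sigma> D) (abs_val d)"
proof -
  have absD: "abs_val ` D \<subseteq> E"
    using assms abs_closed by auto
  then obtain m where m: "m \<in> abs_val ` D" "\<forall>b\<in>abs_val ` D. le m b"
    using ex_least assms by (metis finite_imageI image_is_empty)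
  have "\<exists>!m. m \<in> abs_val ` D \<and> (\<forall>d\<in>D. le m (abs_val d))"
    using m le_antisym absD by (intro ex1I[of _ m]) blast+
  from theI'[OF this]
  show "os_init le \<sigma> D \<in> abs_val ` D" "\<forall>d\<in>D. le (os_init le \<sigma> D) (abs_val d)"
    unfolding os_init_def by auto
qed

lemma os_init_image_inv: "D \<subseteq> E \<Longrightarrow> os_init le \<sigma> (\<sigma> ` D) = os_init le \<sigma> D"
  unfolding os_init_def using abs_inv by (force simp: image_image subset_iff)

end

locale osb_over_fsb = osb_object E le \<sigma> for E :: "'b set" and le \<sigma> +
  fixes X :: "'c set" and \<tau> :: "'c \<Rightarrow> 'c" and \<phi> :: "'b \<Rightarrow> 'c"
  assumes target: "fsb_obj X \<tau>" and mor: "fsb_mor E \<sigma> X \<tau> \<phi>"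
begin

lemma target_inv_closed: "x \<in> X \<Longrightarrow> \<tau> x \<in> X"
  using target by (simp add: fsb_obj_def)

lemma target_inv_inv: "x \<in> X \<Longrightarrow> \<tau> (\<tau> x) = x"
  using target by (simp add: fsb_obj_def)

lemma image_eq: "\<phi> ` E = X"
  using mor by (simp add: fsb_mor_def)

lemma equivariant: "e \<in> E \<Longrightarrow> \<phi> (\<sigma> e) = \<tau> (\<phi> e)"
  using mor by (simp add: fsb_mor_def)

abbreviation target_zero :: 'c where "target_zero \<equiv> os_zero X \<tau>"

lemma target_zero_fixed: "target_zero \<in> X" "\<tau> target_zero = target_zero"
proof -
  have "\<exists>!z. z \<in> X \<and> \<tau> z = z"
    using target unfolding fsb_obj_def by blast
  from theI'[OF this] show "target_zero \<in> X" "\<tau> target_zero = target_zero"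
    unfolding os_zero_def by auto
qed

lemma target_fixed_eq_zero: "x \<in> X \<Longrightarrow> \<tau> x = x \<Longrightarrow> x = target_zero"
  using target target_zero_fixed unfolding fsb_obj_def by blast

lemma image_zero: "\<phi> zero = target_zero"
  using target_fixed_eq_zero image_eq zero_fixed equivariant[of zero] by auto

definition fibre :: "'c \<Rightarrow> 'b set" where
  "fibre x = {e \<in> E. \<phi> e = x}"

lemma fibre_subset: "fibre x \<subseteq> E"
  by (auto simp: fibre_def)

lemma fibre_nonempty: "x \<in> X \<Longrightarrow> fibre x \<noteq> {}"
  using image_eq by (auto simp: fibre_def)

lemma fibre_inv: "x \<in> X \<Longrightarrow> \<sigma> ` fibre x = fibre (\<tau> x)"
proof (intro equalityI subsetI)
  fix e assume "e \<in> \<sigma> ` fibre x"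
  then show "e \<in> fibre (\<tau> x)"
    using equivariant inv_closed by (auto simp: fibre_def)
next
  fix e assume "x \<in> X" "e \<in> fibre (\<tau> x)"
  then have "\<sigma> e \<in> fibre x" "e = \<sigma> (\<sigma> e)"
    using equivariant inv_closed inv_inv target_inv_inv by (auto simp: fibre_def)
  then show "e \<in> \<sigma> ` fibre x" by blast
qed

abbreviation fibre_init :: "'c \<Rightarrow> 'b" where
  "fibre_init x \<equiv> os_init le \<sigma> (fibre x)"

lemma fibre_init_least:
  assumes "x \<in> X"
  shows "fibre_init x \<in> abs_val ` fibre x" "\<forall>e\<in>fibre x. le (fibre_init x) (abs_val e)"
  using os_init_least[OF finite_subset[OF fibre_subset finite_carrier] fibre_nonempty[OF assms]
      fibre_subset] .

lemma fibre_init_abs: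
  assumes "x \<in> X"
  obtains e where "e \<in> fibre x" "e \<in> E" "fibre_init x = abs_val e"
  using fibre_init_least(1)[OF assms] fibre_subset by blast

lemma fibre_init_closed: "x \<in> X \<Longrightarrow> fibre_init x \<in> E"
  by (metis fibre_init_abs abs_closed)

lemma zero_le_fibre_init: "x \<in> X \<Longrightarrow> le zero (fibre_init x)"
  by (metis fibre_init_abs zero_le_abs)

lemma fibre_init_inv: "x \<in> X \<Longrightarrow> fibre_init (\<tau> x) = fibre_init x"
  using fibre_inv os_init_image_inv fibre_subset by metis

definition fibre_rep :: "'c \<Rightarrow> 'b" where
  "fibre_rep x = (if fibre_init x \<in> fibre x then fibre_init x else \<sigma> (fibre_init x))"

lemma fibre_rep_in_fibre:
  assumes "x \<in> X" shows "fibre_rep x \<in> fibre x"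
proof -
  obtain e where e: "e \<in> fibre x" "e \<in> E" "fibre_init x = abs_val e"
    using fibre_init_abs[OF assms] .
  then have "\<sigma> (\<sigma> e) = e"
    using inv_inv by blast
  then show ?thesis
    using e abs_cases[of e] by (auto simp: fibre_rep_def)
qed

lemma fibre_rep_closed: "x \<in> X \<Longrightarrow> fibre_rep x \<in> E"
  using fibre_rep_in_fibre fibre_subset by blast

lemma image_fibre_rep: "x \<in> X \<Longrightarrow> \<phi> (fibre_rep x) = x"
  using fibre_rep_in_fibre by (auto simp: fibre_def)

lemma fibre_rep_fixed:
  assumes x: "x \<in> X" and fixed: "\<tau> x = x"
  shows "fibre_rep x = zero"
proof -
  have "zero \<in> fibre x"
    using target_fixed_eq_zero[OF x fixed] image_zero zero_fixed by (simp add: fibre_def)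
  moreover have "abs_val zero = zero"
    using abs_cases zero_fixed(2) by metis
  ultimately have "le (fibre_init x) zero"
    using fibre_init_least(2)[OF x] by metis
  then have "fibre_init x = zero"
    using zero_le_fibre_init[OF x] le_antisym[OF fibre_init_closed[OF x] zero_fixed(1)] by blast
  then show ?thesis
    using zero_fixed by (simp add: fibre_rep_def)
qed

lemma fibre_rep_inv:
  assumes x: "x \<in> X" shows "fibre_rep (\<tau> x) = \<sigma> (fibre_rep x)"
proof (cases "\<tau> x = x")
  case True
  then show ?thesis using fibre_rep_fixed[OF x] zero_fixed by simp
next
  case False
  then have disjoint: "fibre x \<inter> fibre (\<tau> x) = {}"
    by (auto simp: fibre_def)
  have init_inv: "fibre_init (\<tau> x) = fibre_init x"
    using fibre_init_inv[OF x] .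
  show ?thesis
  proof (cases "fibre_init x \<in> fibre x")
    case True
    then have "fibre_init x \<notin> fibre (\<tau> x)"
      using disjoint by blast
    then show ?thesis
      using True init_inv by (simp add: fibre_rep_def)
  next
    case False
    obtain e where e: "e \<in> fibre x" "e \<in> E" "fibre_init x = abs_val e"
      using fibre_init_abs[OF x] .
    then have "fibre_init x = \<sigma> e"
      using False abs_cases[of e] by metis
    moreover have "\<sigma> e \<in> fibre (\<tau> x)"
      using fibre_inv[OF x] e(1) by blast
    moreover have "\<sigma> (\<sigma> e) = e"
      using inv_inv e(2) .
    ultimately show ?thesis
      using False init_inv by (simp add: fibre_rep_def)
  qed
qed

definition induced_le :: "'c \<Rightarrow> 'c \<Rightarrow> bool" where
  "induced_le x y \<longleftrightarrow> x \<in> X \<and> y \<in> X \<and> le (fibre_rep x) (fibre_rep y)"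

lemma induced_le_carrier: "induced_le x y \<Longrightarrow> x \<in> X \<and> y \<in> X"
  by (simp add: induced_le_def)

lemma osb_obj_induced: "osb_obj X induced_le \<tau>"
  unfolding osb_obj_def
proof (intro conjI)
  show "finite X"
    using target by (simp add: fsb_obj_def)
  show "\<exists>!z. z \<in> X \<and> \<tau> z = z"
    using target by (simp add: fsb_obj_def)
  show "\<forall>e\<in>X. \<tau> e \<in> X \<and> \<tau> (\<tau> e) = e"
    using target_inv_closed target_inv_inv by blast
  show "\<forall>e\<in>X. \<forall>f\<in>X. induced_le e f \<longrightarrow> induced_le (\<tau> f) (\<tau> e)"
    using inv_antimono fibre_rep_closed fibre_rep_inv target_inv_closed
    unfolding induced_le_def by simp
  show "\<forall>x\<in>X. induced_le x x"
    using le_refl fibre_rep_closed by (simp add: induced_le_def)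
  show "\<forall>x\<in>X. \<forall>y\<in>X. induced_le x y \<and> induced_le y x \<longrightarrow> x = y"
    using le_antisym fibre_rep_closed image_fibre_rep unfolding induced_le_def by metis
  show "\<forall>x\<in>X. \<forall>y\<in>X. \<forall>z\<in>X. induced_le x y \<and> induced_le y z \<longrightarrow> induced_le x z"
    using le_trans fibre_rep_closed unfolding induced_le_def by blast
  show "\<forall>x\<in>X. \<forall>y\<in>X. induced_le x y \<or> induced_le y x"
    using le_total fibre_rep_closed unfolding induced_le_def by blast
qed

lemma fibre_init_eq_fibre_rep:
  assumes "x \<in> os_pos X induced_le \<tau>"
  shows "os_init le \<sigma> (fibre x) = fibre_rep x"
proof -
  have x: "x \<in> X" and zero_lt: "le (fibre_rep target_zero) (fibre_rep x)" "x \<noteq> target_zero"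
    using assms by (auto simp: os_pos_def os_lt_def induced_le_def)
  have "fibre_init x \<in> fibre x"
  proof (rule ccontr)
    assume "fibre_init x \<notin> fibre x"
    then have "le (fibre_rep x) zero"
      using inv_antimono[OF zero_fixed(1) fibre_init_closed[OF x] zero_le_fibre_init[OF x]]
        zero_fixed(2) by (simp add: fibre_rep_def)
    then have "fibre_rep x = zero"
      using zero_lt(1) fibre_rep_fixed[OF target_zero_fixed] le_antisym fibre_rep_closed[OF x]
        zero_fixed(1) by metis
    then show False
      using image_fibre_rep[OF x] image_zero zero_lt(2) by simp
  qed
  then show ?thesis by (simp add: fibre_rep_def)
qed

lemma osb_mor_induced: "osb_mor E le \<sigma> X induced_le \<tau> \<phi>"
  unfolding osb_mor_def fibre_def[symmetric]
proof (intro conjI ballI impI)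
  show "fsb_mor E \<sigma> X \<tau> \<phi>" by (rule mor)
  fix x y assume x: "x \<in> os_pos X induced_le \<tau>" and y: "y \<in> os_pos X induced_le \<tau>"
  show "fibre_init x \<in> fibre x"
    using fibre_init_eq_fibre_rep[OF x] fibre_rep_in_fibre x by (simp add: os_pos_def)
  assume "os_lt induced_le x y"
  moreover have "fibre_rep x \<noteq> fibre_rep y" if "x \<noteq> y" "x \<in> X" "y \<in> X"
    using that image_fibre_rep by metis
  ultimately show "os_lt le (fibre_init x) (fibre_init y)"
    using fibre_init_eq_fibre_rep[OF x] fibre_init_eq_fibre_rep[OF y]
    by (auto simp: os_lt_def induced_le_def)
qed

end

text \<open>Orderings are required to vanish off the carrier; otherwise there would be
  infinitely many of them.\<close>

definition osb_orders :: "'a set \<Rightarrow> ('a \<Rightarrow> 'a) \<Rightarrow> ('a \<Rightarrow> 'a \<Rightarrow> bool) set" where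
  "osb_orders X \<tau> = {le. osb_obj X le \<tau> \<and> (\<forall>x y. le x y \<longrightarrow> x \<in> X \<and> y \<in> X)}"

lemma finite_osb_orders:
  assumes "finite X" shows "finite (osb_orders X \<tau>)"
proof -
  have "osb_orders X \<tau> \<subseteq> (\<lambda>R x y. (x, y) \<in> R) ` Pow (X \<times> X)"
    by (auto simp: osb_orders_def intro!: image_eqI[of _ _ "{(x, y). _ x y}"])
  then show ?thesis
    using assms by (simp add: finite_subset)
qed

lemma ex_osb_orders_mor:
  assumes "osb_obj E le \<sigma>" "fsb_obj X \<tau>" "fsb_mor E \<sigma> X \<tau> \<phi>"
  shows "\<exists>le'\<in>osb_orders X \<tau>. osb_mor E le \<sigma> X le' \<tau> \<phi>"
proof -
  interpret osb_over_fsb E le \<sigma> X \<tau> \<phi>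
    using assms by unfold_locales (auto simp: osb_object_def)
  show ?thesis
    using osb_obj_induced osb_mor_induced induced_le_carrier by (auto simp: osb_orders_def)
qed

lemma fsb_obj_nat_copy:
  assumes "fsb_obj X \<tau>"
  obtains Y :: "nat set" and s h where "fsb_obj Y s" "fsb_mor Y s X \<tau> h"
    "\<forall>E \<sigma> \<phi>. fsb_mor E \<sigma> X \<tau> \<phi> \<longrightarrow>
       (\<exists>\<psi>. fsb_mor E \<sigma> Y s \<psi> \<and> (\<forall>e\<in>E. \<phi> e = h (\<psi> e)))"
proof -
  have fin: "finite X" and inv: "\<And>x. x \<in> X \<Longrightarrow> \<tau> x \<in> X \<and> \<tau> (\<tau> x) = x"
    and fixed: "\<exists>!z. z \<in> X \<and> \<tau> z = z"
    using assms by (auto simp: fsb_obj_def)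
  obtain enc :: "'a \<Rightarrow> nat" where inj: "inj_on enc X"
    using finite_imp_inj_to_nat_seg[OF fin] by blast
  define h where "h = the_inv_into X enc"
  define s where "s = (\<lambda>y. enc (\<tau> (h y)))"
  have h_enc: "\<And>x. x \<in> X \<Longrightarrow> h (enc x) = x"
    unfolding h_def using the_inv_into_f_f[OF inj] .
  have enc_inv: "\<And>x. x \<in> X \<Longrightarrow> s (enc x) = enc (\<tau> x)"
    by (simp add: s_def h_enc)
  have fixed_iff: "s (enc x) = enc x \<longleftrightarrow> \<tau> x = x" if "x \<in> X" for x
    using inj_on_eq_iff[OF inj] inv that by (simp add: enc_inv)
  have "\<exists>!z. z \<in> enc ` X \<and> s z = z"
    using fixed fixed_iff by blast
  then have obj: "fsb_obj (enc ` X) s"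
    using fin inv by (simp add: fsb_obj_def enc_inv)
  have mor: "fsb_mor (enc ` X) s X \<tau> h"
    using inv h_enc by (simp add: fsb_mor_def enc_inv image_image)
  have factor: "\<exists>\<psi>. fsb_mor E \<sigma> (enc ` X) s \<psi> \<and> (\<forall>e\<in>E. \<phi> e = h (\<psi> e))"
    if "fsb_mor E \<sigma> X \<tau> \<phi>" for E \<sigma> \<phi>
    using that h_enc enc_inv unfolding fsb_mor_def
    by (intro exI[of _ "enc \<circ> \<phi>"]) (auto simp: image_comp)
  show ?thesis
    by (intro that[OF obj mor] allI impI factor)
qed

lemma osb_orders_nat_cover:
  fixes X :: "'a set"
  assumes "fsb_obj X \<tau>"
  obtains Y :: "nat set" and s h where "finite (osb_orders Y s)"
    "\<forall>le\<in>osb_orders Y s. osb_obj Y le s \<and> fsb_mor Y s X \<tau> h"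
    "\<forall>(E :: 'b set) le \<sigma> \<phi>. osb_obj E le \<sigma> \<and> fsb_mor E \<sigma> X \<tau> \<phi> \<longrightarrow>
       (\<exists>le'\<in>osb_orders Y s. \<exists>\<psi>. osb_mor E le \<sigma> Y le' s \<psi> \<and> (\<forall>e\<in>E. \<phi> e = h (\<psi> e)))"
proof -
  obtain Y :: "nat set" and s h where Y: "fsb_obj Y s" and h: "fsb_mor Y s X \<tau> h"
    and factor: "\<forall>(E :: 'b set) \<sigma> \<phi>. fsb_mor E \<sigma> X \<tau> \<phi> \<longrightarrow>
                   (\<exists>\<psi>. fsb_mor E \<sigma> Y s \<psi> \<and> (\<forall>e\<in>E. \<phi> e = h (\<psi> e)))"
    by (rule fsb_obj_nat_copy[OF assms])
  have "finite Y"
    using Y by (simp add: fsb_obj_def)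
  then have finite: "finite (osb_orders Y s)"
    by (rule finite_osb_orders)
  have objects: "\<forall>le\<in>osb_orders Y s. osb_obj Y le s \<and> fsb_mor Y s X \<tau> h"
    using h by (simp add: osb_orders_def)
  have cover: "\<exists>le'\<in>osb_orders Y s. \<exists>\<psi>. osb_mor E le \<sigma> Y le' s \<psi> \<and> (\<forall>e\<in>E. \<phi> e = h (\<psi> e))"
    if E: "osb_obj E le \<sigma>" and \<phi>: "fsb_mor E \<sigma> X \<tau> \<phi>" for E :: "'b set" and le \<sigma> \<phi>
  proof -
    obtain \<psi> where \<psi>: "fsb_mor E \<sigma> Y s \<psi>" "\<forall>e\<in>E. \<phi> e = h (\<psi> e)"
      using factor \<phi> by blast
    then show ?thesis
      using ex_osb_orders_mor[OF E Y \<psi>(1)] by blast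
  qed
  show ?thesis
    using cover by (intro that[OF finite objects] allI impI) blast
qed

theorem lemmaF:
  fixes X :: "'a set" and \<tau> :: "'a \<Rightarrow> 'a"
  assumes "fsb_obj X \<tau>"
  shows "\<exists>(Ys :: (nat set \<times> (nat \<Rightarrow> nat \<Rightarrow> bool) \<times> (nat \<Rightarrow> nat)) list)
            (\<phi>s :: (nat \<Rightarrow> 'a) list).
     length \<phi>s = length Ys
     \<and> (\<forall>i<length Ys. case Ys ! i of (E, le, \<sigma>) \<Rightarrow>
           osb_obj E le \<sigma> \<and> fsb_mor E \<sigma> X \<tau> (\<phi>s ! i))
     \<and> (\<forall>(E :: nat set) le \<sigma> (\<phi> :: nat \<Rightarrow> 'a).
           osb_obj E le \<sigma> \<and> fsb_mor E \<sigma> X \<tau> \<phi> \<longrightarrow>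
           (\<exists>i<length Ys. case Ys ! i of (E', le', \<sigma>') \<Rightarrow>
              (\<exists>\<psi>. osb_mor E le \<sigma> E' le' \<sigma>' \<psi> \<and> (\<forall>e\<in>E. \<phi> e = (\<phi>s ! i) (\<psi> e)))))"
proof -
  obtain Y :: "nat set" and s h where finite: "finite (osb_orders Y s)"
    and objects: "\<forall>le\<in>osb_orders Y s. osb_obj Y le s \<and> fsb_mor Y s X \<tau> h"
    and cover: "\<forall>(E :: nat set) le \<sigma> \<phi>. osb_obj E le \<sigma> \<and> fsb_mor E \<sigma> X \<tau> \<phi> \<longrightarrow>
       (\<exists>le'\<in>osb_orders Y s. \<exists>\<psi>. osb_mor E le \<sigma> Y le' s \<psi> \<and> (\<forall>e\<in>E. \<phi> e = h (\<psi> e)))"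
    by (rule osb_orders_nat_cover[OF assms])
  from finite_list[OF finite] obtain orders where orders: "set orders = osb_orders Y s" ..
  define Ys where "Ys = map (\<lambda>le. (Y, le, s)) orders"
  define \<phi>s where "\<phi>s = replicate (length Ys) h"
  have "case Ys ! i of (E, le, \<sigma>) \<Rightarrow> osb_obj E le \<sigma> \<and> fsb_mor E \<sigma> X \<tau> (\<phi>s ! i)"
    if "i < length Ys" for i
    using that objects orders nth_mem[of i orders] by (simp add: Ys_def \<phi>s_def)
  moreover have "\<exists>i<length Ys. case Ys ! i of (E', le', \<sigma>') \<Rightarrow>
      \<exists>\<psi>. osb_mor E le \<sigma> E' le' \<sigma>' \<psi> \<and> (\<forall>e\<in>E. \<phi> e = (\<phi>s ! i) (\<psi> e))"
    if \<phi>: "osb_obj E le \<sigma> \<and> fsb_mor E \<sigma> X \<tau> \<phi>" for E :: "nat set" and le \<sigma> and \<phi> :: "nat \<Rightarrow> 'a"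
  proof -
    obtain le' \<psi> where "le' \<in> set orders" "osb_mor E le \<sigma> Y le' s \<psi>" "\<forall>e\<in>E. \<phi> e = h (\<psi> e)"
      using cover \<phi> orders by blast
    moreover from this(1) obtain i where "i < length orders" "orders ! i = le'"
      by (auto simp: in_set_conv_nth)
    ultimately show ?thesis
      by (auto simp: Ys_def \<phi>s_def intro!: exI[of _ i] exI[of _ \<psi>])
  qed
  ultimately show ?thesis
    by (intro exI[of _ Ys] exI[of _ \<phi>s]) (simp add: \<phi>s_def)
qed

end
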